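(* Let $k\ge 1$ be an integer, let $\beta\in\mathbb{R}_{>1}$ be a Parry number and let $U_\beta$ be the corresponding canonical Parry--Bertrand numeration system. Let $\mathbf{s}$ be a binary $U_\beta$-automatic sequence, generated by a DFAO $\mathcal{B}$. Then $C_{2k}(\mathbf{s},N)\gg N$; that is, there exists a constant $c>0$, depending only on $\beta$, $k$ and the number of states of $\mathcal{B}$, such that $C_{2k}(\mathbf{s},N)\ge cN$ for all sufficiently large $N$.
   Context: Correlation measure: for a sequence $\mathbf{s}=(\mathbf{s}(n))_{n\ge0}$ over $\{0,1\}$, an integer $k\ge1$, a vector $D=(d_1,\dots,d_k)\in\mathbb{N}^k$ with $0\le d_1<d_2<\cdots<d_k$ and $M\in\mathbb{N}$, put $V(\mathbf{s},M,D)=\sum_{n=0}^{M-1}(-1)^{\mathbf{s}(n+d_1)+\cdots+\mathbf{s}(n+d_k)}$. The $N$th correlation measure of order $k$ is $C_k(\mathbf{s},N)=\max_{M,D}|V(\mathbf{s},M,D)|$, the maximum taken over all such $D$ and all integers $M$ with $M+d_k\le N$. $\beta$-expansions: for $\beta>1$, let $A_\beta=\{0,1,\dots,\lceil\beta\rceil-1\}$; for $x\in[0,1)$, $d_\beta(x)$ is the greedy expansion $x=\sum_{j\ge1}c_j\beta^{-j}$ with $c_j\in A_\beta$, and $d_\beta(1)=\lim_{x\to1^-}d_\beta(x)$. $\beta$ is a Parry number if $d_\beta(1)$ is ultimately periodic. Canonical numeration $U_\beta$: write $d_\beta(1)=t(1)\cdots t(m)(t(m+1)\cdots t(m+k'))^\omega$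 with $m,k'\ge0$ minimal. Set $U_\beta(0)=1$, $U_\beta(i)=t(1)U_\beta(i-1)+\cdots+t(i)U_\beta(0)+1$ for $1\le i\le m+k'-1$, and for $n\ge m+k'$: $U_\beta(n)=t(1)U_\beta(n-1)+\cdots+t(m+k')U_\beta(n-m-k')+U_\beta(n-k')-t(1)U_\beta(n-k'-1)-\cdots-t(m)U_\beta(n-m-k')$. Every $n\ge0$ has a greedy representation $n=\sum_{i=0}^t c_iU_\beta(i)$; $\mathrm{rep}_{U_\beta}(n)=c_t\cdots c_0$ (with $c_t\neq 0$; $\mathrm{rep}(0)$ is the empty word), and $L_\beta=\{\mathrm{rep}_{U_\beta}(n):n\ge0\}$. A binary sequence $\mathbf{s}$ is $U_\beta$-automatic if there is a deterministic finite automaton with output (DFAO) $\mathcal{B}$ over the digit alphabet, with outputs in $\{0,1\}$, such that $\mathbf{s}(n)$ is the output of $\mathcal{B}$ on input $\mathrm{rep}_{U_\beta}(n)$ for all $n\ge0$. *)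

theory Defs
  imports Complex_Main
begin

definition beta_T :: "real \<Rightarrow> real \<Rightarrow> real" where
  "beta_T \<beta> x = \<beta> * x - of_int \<lfloor>\<beta> * x\<rfloor>"

definition beta_digit :: "real \<Rightarrow> real \<Rightarrow> nat \<Rightarrow> nat" where
  "beta_digit \<beta> x j = nat \<lfloor>\<beta> * ((beta_T \<beta> ^^ (j - 1)) x)\<rfloor>"

text \<open>d_beta(1) = lim_{x \<rightarrow> 1-} d_beta(x), the limit taken digitwise
  (product of discrete topologies): digit j of d_beta(1) is the value that digit j of
  d_beta(x) eventually takes as x tends to 1 from the left.\<close>
definition dbeta1 :: "real \<Rightarrow> nat \<Rightarrow> nat" where
  "dbeta1 \<beta> j = (THE c. \<forall>\<^sub>F x in at_left 1. beta_digit \<beta> x j = c)"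

definition ult_periodic_from :: "(nat \<Rightarrow> nat) \<Rightarrow> nat \<Rightarrow> nat \<Rightarrow> bool" where
  "ult_periodic_from t m p \<longleftrightarrow> p > 0 \<and> (\<forall>n>m. t (n + p) = t n)"

definition parry :: "real \<Rightarrow> bool" where
  "parry \<beta> \<longleftrightarrow> \<beta> > 1 \<and> (\<exists>m p. ult_periodic_from (dbeta1 \<beta>) m p)"

text \<open>Minimal preperiod m and minimal period k' of d_beta(1) = t(1)...t(m)(t(m+1)...t(m+k'))^omega.\<close>
definition parry_m :: "real \<Rightarrow> nat" where
  "parry_m \<beta> = (LEAST m. \<exists>p. ult_periodic_from (dbeta1 \<beta>) m p)"

definition parry_k :: "real \<Rightarrow> nat" where
  "parry_k \<beta> = (LEAST p. ult_periodic_from (dbeta1 \<beta>) (parry_m \<beta>) p)"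

definition U_step :: "(nat \<Rightarrow> nat) \<Rightarrow> nat \<Rightarrow> nat \<Rightarrow> int list \<Rightarrow> int" where
  "U_step t m kp xs = (let n = length xs in
     if n = 0 then 1
     else if n < m + kp then (\<Sum>j=1..n. int (t j) * xs ! (n - j)) + 1
     else (\<Sum>j=1..m+kp. int (t j) * xs ! (n - j)) + xs ! (n - kp)
          - (\<Sum>j=1..m. int (t j) * xs ! (n - kp - j)))"

primrec U_list :: "(nat \<Rightarrow> nat) \<Rightarrow> nat \<Rightarrow> nat \<Rightarrow> nat \<Rightarrow> int list" where
  "U_list t m kp 0 = []"
| "U_list t m kp (Suc n) = U_list t m kp n @ [U_step t m kp (U_list t m kp n)]"

definition U_beta :: "real \<Rightarrow> nat \<Rightarrow> int" where
  "U_beta \<beta> n = U_list (dbeta1 \<beta>) (parry_m \<beta>) (parry_k \<beta>) (Suc n) ! n"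

primrec greedy_digits :: "(nat \<Rightarrow> nat) \<Rightarrow> nat \<Rightarrow> nat \<Rightarrow> nat list" where
  "greedy_digits U 0 r = [r div U 0]"
| "greedy_digits U (Suc i) r = (r div U (Suc i)) # greedy_digits U i (r mod U (Suc i))"

definition rep_U :: "real \<Rightarrow> nat \<Rightarrow> nat list" where
  "rep_U \<beta> n = (let U = (\<lambda>i. nat (U_beta \<beta> i)) in
     if n = 0 then [] else greedy_digits U (GREATEST i. U i \<le> n) n)"

definition dfao :: "nat \<Rightarrow> (nat \<Rightarrow> nat \<Rightarrow> nat) \<Rightarrow> nat \<Rightarrow> (nat \<Rightarrow> nat) \<Rightarrow> bool" where
  "dfao Q \<delta> q0 out \<longleftrightarrow> q0 < Q \<and> (\<forall>q d. q < Q \<longrightarrow> \<delta> q d < Q) \<and> (\<forall>q<Q. out q \<le> 1)"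

definition generated_by :: "real \<Rightarrow> (nat \<Rightarrow> nat \<Rightarrow> nat) \<Rightarrow> nat \<Rightarrow> (nat \<Rightarrow> nat) \<Rightarrow> (nat \<Rightarrow> nat) \<Rightarrow> bool" where
  "generated_by \<beta> \<delta> q0 out s \<longleftrightarrow> (\<forall>n. s n = out (foldl \<delta> q0 (rep_U \<beta> n)))"

definition corrV :: "(nat \<Rightarrow> nat) \<Rightarrow> nat \<Rightarrow> nat list \<Rightarrow> int" where
  "corrV s M D = (\<Sum>n<M. (-1) ^ (\<Sum>d\<leftarrow>D. s (n + d)))"

definition corrC :: "nat \<Rightarrow> (nat \<Rightarrow> nat) \<Rightarrow> nat \<Rightarrow> int" where
  "corrC k s N = Max {\<bar>corrV s M D\<bar> | M D.
       length D = k \<and> sorted_wrt (<) D \<and> M + last D \<le> N}"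

end

theory Submission
  imports Defs "HOL-Library.FuncSet"
begin

text \<open>Near 1 the greedy expansion of x starts with the digits t(1) t(2) ... of d_beta(1), so
  that the J-th iterate of the beta transformation is x \<mapsto> beta^J x - (t(1) beta^(J-1) + ... + t(J)),
  with the value at 1 in (0, 1]. Together with the periodicity of t this turns the Parry recurrence
  into U(n) = 1 + t(1) U(n-1) + ... + t(n) U(0), whence beta^n \<le> U(n) \<le> beta^(n+1) / (beta - 1)
  and U(n+1) - U(n) \<ge> (beta - 1) beta^n. Hence for T a fixed distance above L and n < U(L),
  the representation of U(T) + n is 1 0...0 followed by that of n, and s(U(T) + n) only depends on
  n and on the state reached after reading 1 0^(T-L). By pigeonhole, 2k of any Q(2k - 1) + 1
  consecutive such T reach the same state; for the shifts U(T) so obtained every term of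
  V(s, U(L), D) is 1, and U(L) is proportional to N.\<close>

definition prefix_value :: "real \<Rightarrow> nat \<Rightarrow> real" where
  "prefix_value \<beta> J = (\<Sum>j=1..J. real (dbeta1 \<beta> j) * \<beta> ^ (J - j))"

lemma prefix_value_Suc:
  "prefix_value \<beta> (Suc J) = \<beta> * prefix_value \<beta> J + real (dbeta1 \<beta> (Suc J))"
  unfolding prefix_value_def sum_distrib_left
  by (subst sum.cl_ivl_Suc) (auto simp: Suc_diff_le mult.left_commute intro!: sum.cong)

lemma dbeta1_eqI:
  assumes "\<forall>\<^sub>F x in at_left 1. beta_digit \<beta> x j = c"
  shows "dbeta1 \<beta> j = c"
  unfolding dbeta1_def
proof (rule the_equality)
  fix c' assume "\<forall>\<^sub>F x in at_left (1::real). beta_digit \<beta> x j = c'"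
  with assms have "\<forall>\<^sub>F x in at_left (1::real). c' = c"
    by eventually_elim simp
  then show "c' = c" by (auto dest: eventually_happens')
qed (fact assms)

lemma floor_eventually_at_left_one:
  assumes "z > 0"
  shows "\<forall>\<^sub>F x in at_left (1::real). \<lfloor>a - z * (1 - x)\<rfloor> = \<lceil>a\<rceil> - 1"
proof -
  define \<epsilon> where "\<epsilon> = (a - (\<lceil>a\<rceil> - 1)) / z"
  have "a - (\<lceil>a\<rceil> - 1) > 0" by linarith
  then have "\<epsilon> > 0" using assms by (simp add: \<epsilon>_def)
  then have "\<forall>\<^sub>F x in at_left (1::real). x \<in> {1 - \<epsilon><..<1}"
    by (intro eventually_at_left_real) simp
  then show ?thesis
  proof (rule eventually_mono)
    fix x assume x: "x \<in> {1 - \<epsilon><..<(1::real)}"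
    then have "z * (1 - x) < z * \<epsilon>" "0 < z * (1 - x)"
      using assms by (auto intro!: mult_strict_left_mono)
    then show "\<lfloor>a - z * (1 - x)\<rfloor> = \<lceil>a\<rceil> - 1"
      using assms unfolding floor_eq_iff \<epsilon>_def by simp linarith
  qed
qed

lemma beta_T_iterate_near_one:
  assumes "\<beta> > 1"
  shows "(\<forall>\<^sub>F x in at_left 1. (beta_T \<beta> ^^ J) x = \<beta> ^ J * x - prefix_value \<beta> J)
    \<and> 0 < \<beta> ^ J - prefix_value \<beta> J \<and> \<beta> ^ J - prefix_value \<beta> J \<le> 1"
proof (induction J)
  case 0
  then show ?case by (simp add: prefix_value_def)
next
  case (Suc J)
  define y where "y = \<beta> ^ J - prefix_value \<beta> J"
  define e where "e = \<lceil>\<beta> * y\<rceil> - 1"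
  have affine: "\<forall>\<^sub>F x in at_left 1. (beta_T \<beta> ^^ J) x = \<beta> ^ J * x - prefix_value \<beta> J"
    and "y > 0" using Suc by (simp_all add: y_def)
  then have "\<beta> * y > 0" using assms by simp
  then have e_bounds: "0 \<le> e" "e < \<beta> * y" "\<beta> * y \<le> e + 1"
    unfolding e_def by linarith+
  have "\<beta> * (\<beta> ^ J * x - prefix_value \<beta> J) = \<beta> * y - \<beta> ^ Suc J * (1 - x)" for x
    by (simp add: y_def algebra_simps)
  then have floor: "\<forall>\<^sub>F x in at_left 1. \<lfloor>\<beta> * (\<beta> ^ J * x - prefix_value \<beta> J)\<rfloor> = e"
    unfolding e_def using assms by (simp add: floor_eventually_at_left_one)
  from affine floor have "\<forall>\<^sub>F x in at_left 1. beta_digit \<beta> x (Suc J) = nat e"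
    by eventually_elim (simp add: beta_digit_def)
  then have t: "real (dbeta1 \<beta> (Suc J)) = e"
    using dbeta1_eqI e_bounds(1) by fastforce
  from affine floor have "\<forall>\<^sub>F x in at_left 1.
      (beta_T \<beta> ^^ Suc J) x = \<beta> ^ Suc J * x - prefix_value \<beta> (Suc J)"
    by eventually_elim (simp add: beta_T_def, simp add: prefix_value_Suc t algebra_simps)
  moreover have "\<beta> ^ Suc J - prefix_value \<beta> (Suc J) = \<beta> * y - e"
    by (simp add: prefix_value_Suc t y_def algebra_simps)
  ultimately show ?case using e_bounds by simp
qed

lemma prefix_value_bounds:
  assumes "\<beta> > 1"
  shows "prefix_value \<beta> J < \<beta> ^ J" "\<beta> ^ J - prefix_value \<beta> J \<le> 1"
  using beta_T_iterate_near_one[OF assms, of J] by auto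

lemma U_list_eq_map: "U_list t m p n = map (\<lambda>i. U_list t m p (Suc i) ! i) [0..<n]"
proof (induction n)
  case (Suc n)
  then have "length (U_list t m p n) = n" by simp
  with Suc show ?case by (simp add: nth_append)
qed simp

lemma U_beta_eq_U_step:
  "U_beta \<beta> n = U_step (dbeta1 \<beta>) (parry_m \<beta>) (parry_k \<beta>) (map (U_beta \<beta>) [0..<n])"
proof -
  have "U_list (dbeta1 \<beta>) (parry_m \<beta>) (parry_k \<beta>) n = map (U_beta \<beta>) [0..<n]"
    by (subst U_list_eq_map) (simp add: U_beta_def)
  then show ?thesis unfolding U_beta_def by (simp add: nth_append)
qed

lemma parry_ult_periodic:
  assumes "parry \<beta>"
  shows "ult_periodic_from (dbeta1 \<beta>) (parry_m \<beta>) (parry_k \<beta>)"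
proof -
  from assms have "\<exists>m p. ult_periodic_from (dbeta1 \<beta>) m p" unfolding parry_def by blast
  then have "\<exists>p. ult_periodic_from (dbeta1 \<beta>) (parry_m \<beta>) p"
    unfolding parry_m_def by (rule LeastI_ex)
  then show ?thesis unfolding parry_k_def by (rule LeastI_ex)
qed

text \<open>The right-hand side has the shape of the Parry recurrence in U_step.\<close>
lemma convolution_periodic_split:
  fixes u :: "nat \<Rightarrow> 'a::comm_ring"
  assumes per: "\<And>j. j > m \<Longrightarrow> t (j + p) = t j" and n: "m + p \<le> n"
  shows "(\<Sum>j=1..n. t j * u (n - j)) = (\<Sum>j=1..m+p. t j * u (n - j))
    + (\<Sum>j=1..n-p. t j * u (n - p - j)) - (\<Sum>j=1..m. t j * u (n - p - j))"
proof -
  define h where "h j = t j * u (n - p - j)" for j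
  have "(\<Sum>j=1..n. t j * u (n - j)) = (\<Sum>j=1..m+p. t j * u (n - j))
      + (\<Sum>j=m+p+1..(n-p)+p. t j * u (n - j))"
    using sum.ub_add_nat[of 1 "m + p" "\<lambda>j. t j * u (n - j)" "n - (m + p)"] n by simp
  also have "(\<Sum>j=m+p+1..(n-p)+p. t j * u (n - j)) = (\<Sum>j=m+1..n-p. h j)"
    using sum.shift_bounds_cl_nat_ivl[of "\<lambda>j. t j * u (n - j)" "m + 1" p "n - p"]
    by (simp add: ac_simps h_def per diff_diff_add)
  also have "(\<Sum>j=m+1..n-p. h j) = (\<Sum>j=1..n-p. h j) - (\<Sum>j=1..m. h j)"
    using sum.ub_add_nat[of 1 m h "n - p - m"] n by simp
  finally show ?thesis by (simp add: h_def)
qed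

lemma U_beta_convolution:
  assumes "parry \<beta>"
  shows "U_beta \<beta> n = 1 + (\<Sum>j=1..n. int (dbeta1 \<beta> j) * U_beta \<beta> (n - j))"
proof (induction n rule: less_induct)
  case (less n)
  define t where "t j = int (dbeta1 \<beta> j)" for j
  define m where "m = parry_m \<beta>"
  define p where "p = parry_k \<beta>"
  have p: "p > 0" and per: "\<And>j. j > m \<Longrightarrow> t (j + p) = t j"
    using parry_ult_periodic[OF assms] unfolding ult_periodic_from_def t_def m_def p_def by auto
  have sum_map: "(\<Sum>j=1..N. int (dbeta1 \<beta> j) * map (U_beta \<beta>) [0..<n] ! (n - l - j))
      = (\<Sum>j=1..N. t j * U_beta \<beta> (n - l - j))" if "N \<le> n" "0 < n" for N l
    using that by (intro sum.cong) (auto simp: t_def)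
  consider "n = 0" | "0 < n" "n < m + p" | "m + p \<le> n" by linarith
  then show ?case
  proof cases
    case 3
    with p have "U_beta \<beta> n = (\<Sum>j=1..m+p. t j * U_beta \<beta> (n - j)) + U_beta \<beta> (n - p)
        - (\<Sum>j=1..m. t j * U_beta \<beta> (n - p - j))"
      using sum_map[of "m + p" 0] sum_map[of m p]
      by (subst U_beta_eq_U_step) (simp add: U_step_def m_def p_def)
    also have "U_beta \<beta> (n - p) = 1 + (\<Sum>j=1..n-p. t j * U_beta \<beta> (n - p - j))"
      using less[of "n - p"] p 3 by (simp add: t_def)
    finally show ?thesis
      using convolution_periodic_split[where t = t, OF per 3, of "U_beta \<beta>"] by (simp add: t_def)
  qed (use sum_map[of n 0] in \<open>subst U_beta_eq_U_step, simp add: U_step_def m_def p_def t_def\<close>)+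
qed

lemma U_beta_convolution_real:
  assumes "parry \<beta>"
  shows "real_of_int (U_beta \<beta> n)
    = 1 + (\<Sum>j=1..n. real (dbeta1 \<beta> j) * real_of_int (U_beta \<beta> (n - j)))"
  by (subst U_beta_convolution[OF assms]) simp

lemma power_le_U_beta:
  assumes "\<beta> > 1" "parry \<beta>"
  shows "\<beta> ^ n \<le> real_of_int (U_beta \<beta> n)"
proof (induction n rule: less_induct)
  case (less n)
  have "prefix_value \<beta> n
      \<le> (\<Sum>j=1..n. real (dbeta1 \<beta> j) * real_of_int (U_beta \<beta> (n - j)))"
    unfolding prefix_value_def by (intro sum_mono mult_left_mono less) auto
  then show ?case
    using U_beta_convolution_real[OF assms(2), of n] prefix_value_bounds(2)[OF assms(1), of n]
    by linarith
qed

lemma convolution_geometric_sum: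
  "(\<Sum>j=1..n. real (dbeta1 \<beta> j) * (\<Sum>i\<le>n - j. \<beta> ^ i)) = (\<Sum>l=1..n. prefix_value \<beta> l)"
proof (induction n)
  case (Suc n)
  have "(\<Sum>j=1..n. real (dbeta1 \<beta> j) * (\<Sum>i\<le>Suc n - j. \<beta> ^ i))
      = (\<Sum>j=1..n. real (dbeta1 \<beta> j) * (\<Sum>i\<le>n - j. \<beta> ^ i))
        + (\<Sum>j=1..n. real (dbeta1 \<beta> j) * \<beta> ^ (Suc n - j))"
    unfolding sum.distrib[symmetric]
    by (intro sum.cong) (auto simp: Suc_diff_le algebra_simps)
  then show ?case
    using Suc by (simp add: prefix_value_def)
qed simp

lemma U_beta_le_geometric_sum:
  assumes "\<beta> > 1" "parry \<beta>"
  shows "real_of_int (U_beta \<beta> n) \<le> (\<Sum>i\<le>n. \<beta> ^ i)"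
proof (induction n rule: less_induct)
  case (less n)
  have "(\<Sum>j=1..n. real (dbeta1 \<beta> j) * real_of_int (U_beta \<beta> (n - j)))
      \<le> (\<Sum>j=1..n. real (dbeta1 \<beta> j) * (\<Sum>i\<le>n - j. \<beta> ^ i))"
    by (intro sum_mono mult_left_mono less) auto
  also have "\<dots> \<le> (\<Sum>l=1..n. \<beta> ^ l)"
    unfolding convolution_geometric_sum
    by (intro sum_mono less_imp_le prefix_value_bounds(1)[OF assms(1)])
  moreover have "(\<Sum>i\<le>n. \<beta> ^ i) = 1 + (\<Sum>l=1..n. \<beta> ^ l)"
    by (induction n) simp_all
  ultimately show ?case
    using U_beta_convolution_real[OF assms(2), of n] by simp
qed

lemma U_beta_increment:
  assumes "\<beta> > 1" "parry \<beta>"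
  shows "(\<beta> - 1) * \<beta> ^ n \<le> real_of_int (U_beta \<beta> (Suc n)) - real_of_int (U_beta \<beta> n)"
proof -
  define t where "t j = real (dbeta1 \<beta> j)" for j
  define excess where "excess j = real_of_int (U_beta \<beta> j) - \<beta> ^ j" for j
  have excess_nonneg: "excess j \<ge> 0" for j
    using power_le_U_beta[OF assms] by (simp add: excess_def)
  have "t 1 = prefix_value \<beta> 1" by (simp add: prefix_value_def t_def)
  then have "t 1 > 0"
    using prefix_value_bounds(2)[OF assms(1), of 1] assms(1) by simp
  then have "t 1 \<ge> 1" by (simp add: t_def)
  then have "excess n \<le> t 1 * excess n"
    using excess_nonneg[of n] by (simp add: mult_le_cancel_right1)
  also have "\<dots> \<le> (\<Sum>j=1..Suc n. t j * excess (Suc n - j))"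
    using member_le_sum[of 1 "{1..Suc n}" "\<lambda>j. t j * excess (Suc n - j)"] excess_nonneg
    by (simp add: t_def)
  also have "\<dots> = real_of_int (U_beta \<beta> (Suc n)) - 1 - prefix_value \<beta> (Suc n)"
    using U_beta_convolution_real[OF assms(2), of "Suc n"]
    by (simp add: excess_def t_def prefix_value_def right_diff_distrib sum_subtractf)
  finally show ?thesis
    using prefix_value_bounds(2)[OF assms(1), of "Suc n"] by (simp add: excess_def algebra_simps)
qed

definition U_nat :: "real \<Rightarrow> nat \<Rightarrow> nat" where
  "U_nat \<beta> i = nat (U_beta \<beta> i)"

lemma of_nat_U_nat:
  assumes "\<beta> > 1" "parry \<beta>"
  shows "real (U_nat \<beta> i) = real_of_int (U_beta \<beta> i)"
proof -
  have "0 < \<beta> ^ i" using assms(1) by simp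
  then have "U_beta \<beta> i > 0" using power_le_U_beta[OF assms, of i] by linarith
  then show ?thesis by (simp add: U_nat_def)
qed

lemma power_le_U_nat:
  assumes "\<beta> > 1" "parry \<beta>"
  shows "\<beta> ^ n \<le> real (U_nat \<beta> n)"
  using power_le_U_beta[OF assms] of_nat_U_nat[OF assms] by simp

lemma U_nat_le_power:
  assumes "\<beta> > 1" "parry \<beta>"
  shows "real (U_nat \<beta> n) \<le> \<beta> ^ Suc n / (\<beta> - 1)"
proof -
  have "(\<Sum>i\<le>n. \<beta> ^ i) = (\<beta> ^ Suc n - 1) / (\<beta> - 1)"
    using assms(1) by (subst lessThan_Suc_atMost[symmetric], subst geometric_sum) auto
  also have "\<dots> \<le> \<beta> ^ Suc n / (\<beta> - 1)"
    using assms(1) by (simp add: divide_right_mono)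
  finally show ?thesis
    using U_beta_le_geometric_sum[OF assms, of n] of_nat_U_nat[OF assms] by simp
qed

lemma U_nat_increment:
  assumes "\<beta> > 1" "parry \<beta>"
  shows "(\<beta> - 1) * \<beta> ^ n \<le> real (U_nat \<beta> (Suc n)) - real (U_nat \<beta> n)"
  using U_beta_increment[OF assms] of_nat_U_nat[OF assms] by simp

lemma strict_mono_U_nat:
  assumes "\<beta> > 1" "parry \<beta>"
  shows "strict_mono (U_nat \<beta>)"
  unfolding strict_mono_Suc_iff
proof
  fix n
  have "0 < (\<beta> - 1) * \<beta> ^ n" using assms(1) by simp
  then show "U_nat \<beta> n < U_nat \<beta> (Suc n)"
    using U_nat_increment[OF assms, of n] by simp
qed

lemma greedy_digits_leading_zeros:
  assumes "mono U" "r < U (Suc j)"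
  shows "greedy_digits U (j + a) r = replicate a 0 @ greedy_digits U j r"
proof (induction a)
  case (Suc a)
  have "r < U (Suc (j + a))"
    using assms monoD[OF assms(1), of "Suc j" "Suc (j + a)"] by simp
  with Suc show ?case by simp
qed simp

lemma Greatest_strict_mono_le:
  fixes U :: "nat \<Rightarrow> nat"
  assumes "strict_mono U" "U T \<le> n" "n < U (Suc T)"
  shows "(GREATEST i. U i \<le> n) = T"
proof (rule Greatest_equality)
  fix i assume "U i \<le> n"
  with assms have "U i < U (Suc T)" by simp
  then show "i \<le> T" using assms(1) by (simp add: strict_mono_less)
qed (fact assms(2))

lemma rep_U_leading_one:
  assumes "\<beta> > 1" "parry \<beta>" and "j < T" "r < U_nat \<beta> (Suc j)"
    and "U_nat \<beta> T + r < U_nat \<beta> (Suc T)"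
  shows "rep_U \<beta> (U_nat \<beta> T + r) = 1 # replicate (T - Suc j) 0 @ greedy_digits (U_nat \<beta>) j r"
proof -
  have sm: "strict_mono (U_nat \<beta>)" by (rule strict_mono_U_nat[OF assms(1,2)])
  have "U_nat \<beta> (Suc j) \<le> U_nat \<beta> T"
    using assms(3) sm by (simp add: strict_mono_less_eq)
  with assms(4) have r: "r < U_nat \<beta> T" by simp
  obtain i where T: "T = Suc i" and i: "i = j + (T - Suc j)" using assms(3) by (cases T) auto
  have "rep_U \<beta> (U_nat \<beta> T + r) = greedy_digits (U_nat \<beta>) T (U_nat \<beta> T + r)"
    using r Greatest_strict_mono_le[OF sm _ assms(5)]
    by (simp add: rep_U_def Let_def U_nat_def[symmetric])
  also have "\<dots> = 1 # greedy_digits (U_nat \<beta>) i r"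
    using r by (simp add: T)
  also have "greedy_digits (U_nat \<beta>) i r = replicate (T - Suc j) 0 @ greedy_digits (U_nat \<beta>) j r"
    using greedy_digits_leading_zeros[OF strict_mono_mono[OF sm] assms(4)] i by metis
  finally show ?thesis .
qed

lemma U_nat_shift_no_overflow:
  assumes "\<beta> > 1" "parry \<beta>" and g: "\<beta> / (\<beta> - 1)\<^sup>2 < \<beta> ^ g"
    and "L + g \<le> T" "n < U_nat \<beta> L"
  shows "U_nat \<beta> T + n < U_nat \<beta> (Suc T)"
proof -
  have "real n < \<beta> ^ Suc L / (\<beta> - 1)"
    using assms(5) U_nat_le_power[OF assms(1,2), of L] by linarith
  also have "\<dots> = (\<beta> - 1) * (\<beta> ^ L * (\<beta> / (\<beta> - 1)\<^sup>2))"
    using assms(1) by (simp add: power2_eq_square)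
  also have "\<dots> \<le> (\<beta> - 1) * \<beta> ^ (L + g)"
    using g assms(1) by (unfold power_add, intro mult_left_mono) auto
  also have "\<dots> \<le> (\<beta> - 1) * \<beta> ^ T"
    using assms(1,4) by (simp add: power_increasing)
  also have "\<dots> \<le> real (U_nat \<beta> (Suc T)) - real (U_nat \<beta> T)"
    by (rule U_nat_increment[OF assms(1,2)])
  finally show ?thesis by linarith
qed

lemma dfao_foldl_less:
  "dfao Q \<delta> q0 out \<Longrightarrow> q < Q \<Longrightarrow> foldl \<delta> q w < Q"
  by (induction w arbitrary: q) (auto simp: dfao_def)

lemma corrV_even_constant:
  assumes "even (length D)" "\<And>n d. n < M \<Longrightarrow> d \<in> set D \<Longrightarrow> s (n + d) = b n"
  shows "corrV s M D = int M"
proof -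
  have "(-1::int) ^ (\<Sum>d\<leftarrow>D. s (n + d)) = 1" if "n < M" for n
  proof -
    have "(\<Sum>d\<leftarrow>D. s (n + d)) = (\<Sum>d\<leftarrow>D. b n)"
      by (rule arg_cong[where f = sum_list], rule map_cong) (simp_all add: assms(2)[OF that])
    then show ?thesis using assms(1) by (simp add: sum_list_triv)
  qed
  then show ?thesis unfolding corrV_def by simp
qed

lemma corrV_le_corrC:
  assumes "length D = k" "sorted_wrt (<) D" "M + last D \<le> N"
  shows "\<bar>corrV s M D\<bar> \<le> corrC k s N"
proof -
  let ?S = "{\<bar>corrV s M D\<bar> | M D. length D = k \<and> sorted_wrt (<) D \<and> M + last D \<le> N}"
  have "?S \<subseteq> (\<lambda>(M, D). \<bar>corrV s M D\<bar>) ` ({..N} \<times> {D. set D \<subseteq> {..N} \<and> length D = k})"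
  proof
    fix z assume "z \<in> ?S"
    then obtain M D where z: "z = \<bar>corrV s M D\<bar>" "length D = k" "sorted_wrt (<) D" "M + last D \<le> N"
      by blast
    have "set D \<subseteq> {..last D}"
      using z(3) by (induction D) (auto simp: less_imp_le)
    with z show "z \<in> (\<lambda>(M, D). \<bar>corrV s M D\<bar>) ` ({..N} \<times> {D. set D \<subseteq> {..N} \<and> length D = k})"
      by (intro image_eqI[of _ _ "(M, D)"]) auto
  qed
  moreover have "finite ({..N} \<times> {D. set D \<subseteq> {..N} \<and> length D = k})"
    by (intro finite_cartesian_product finite_lists_length_eq) auto
  ultimately have "finite ?S" by (meson finite_imageI finite_subset)
  moreover have "\<bar>corrV s M D\<bar> \<in> ?S" using assms by blast
  ultimately show ?thesis unfolding corrC_def by (rule Max_ge)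
qed

lemma ex_power_bracket:
  fixes \<beta> X :: real
  assumes "\<beta> > 1" "X \<ge> 1"
  obtains L where "\<beta> ^ L \<le> X" "X < \<beta> ^ Suc L"
proof -
  obtain n where "X < \<beta> ^ n" using real_arch_pow[OF assms(1)] by blast
  define l where "l = (LEAST l. X < \<beta> ^ l)"
  have l: "X < \<beta> ^ l" unfolding l_def by (rule LeastI) fact
  then have "l \<noteq> 0" using assms(2) by (cases l) auto
  moreover have "\<not> X < \<beta> ^ (l - 1)"
    unfolding l_def by (rule not_less_Least) (use \<open>l \<noteq> 0\<close> in \<open>simp add: l_def\<close>)
  ultimately show ?thesis using l by (intro that[of "l - 1"]) auto
qed

lemma ex_shifts_maximal_correlation:
  assumes "\<beta> > 1" "parry \<beta>" and dfa: "dfao Q \<delta> q0 out" and gen: "generated_by \<beta> \<delta> q0 out s"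
    and g: "\<beta> / (\<beta> - 1)\<^sup>2 < \<beta> ^ g" and "L > 0"
  shows "\<exists>D. length D = 2 * k \<and> sorted_wrt (<) D \<and> set D \<subseteq> {..U_nat \<beta> (L + g + Q * (2 * k - 1))}
    \<and> corrV s (U_nat \<beta> L) D = int (U_nat \<beta> L)"
proof -
  obtain j where L: "L = Suc j" using \<open>L > 0\<close> gr0_implies_Suc by blast
  define A where "A = {L + g..<L + g + Q * (2 * k - 1) + 1}"
  define state where "state T = foldl \<delta> q0 (1 # replicate (T - L) 0)" for T
  have "0 < Q" using dfa by (simp add: dfao_def)
  have "state \<in> A \<rightarrow> {..<Q}"
    using dfa dfao_foldl_less[OF dfa] by (auto simp: state_def dfao_def)
  with \<open>0 < Q\<close> obtain q where "card A \<le> card (state -` {q} \<inter> A) * Q"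
    using pigeonhole_card[of state A "{..<Q}"] by (auto simp: A_def)
  moreover have "card A = Q * (2 * k - 1) + 1" by (simp add: A_def)
  ultimately have "Q * (2 * k - 1) < Q * card (state -` {q} \<inter> A)"
    by (metis Suc_eq_plus1 Suc_le_eq mult.commute)
  then have "2 * k \<le> card (state -` {q} \<inter> A)"
    by (simp only: mult_less_cancel1) linarith
  then obtain F where F: "F \<subseteq> state -` {q} \<inter> A" "card F = 2 * k"
    by (meson obtain_subset_with_card_n)
  have "finite F" by (rule finite_subset[OF F(1)]) (simp add: A_def)
  have sm: "strict_mono (U_nat \<beta>)" by (rule strict_mono_U_nat[OF assms(1,2)])
  define D where "D = map (U_nat \<beta>) (sorted_list_of_set F)"
  have set_D: "set D = U_nat \<beta> ` F" and length_D: "length D = 2 * k"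
    using \<open>finite F\<close> F(2) by (simp_all add: D_def)
  have "s (n + U_nat \<beta> T) = out (foldl \<delta> q (greedy_digits (U_nat \<beta>) j n))"
    if "n < U_nat \<beta> L" "T \<in> F" for n T
  proof -
    have "state T = q" "L + g \<le> T" using that(2) F(1) by (auto simp: A_def)
    moreover have "U_nat \<beta> T + n < U_nat \<beta> (Suc T)"
      using U_nat_shift_no_overflow[OF assms(1,2) g] that \<open>L + g \<le> T\<close> by blast
    ultimately have "rep_U \<beta> (U_nat \<beta> T + n)
        = 1 # replicate (T - L) 0 @ greedy_digits (U_nat \<beta>) j n"
      using rep_U_leading_one[OF assms(1,2)] that(1) L by simp
    with \<open>state T = q\<close> show ?thesis
      using gen by (simp add: generated_by_def state_def add.commute)
  qed
  then have "corrV s (U_nat \<beta> L) D = int (U_nat \<beta> L)"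
    by (intro corrV_even_constant) (auto simp: set_D length_D)
  moreover have "sorted_wrt (<) D"
    unfolding D_def sorted_wrt_map
    using sorted_wrt_mono_rel[OF _ strict_sorted_list_of_set[of F]] sm
    by (simp add: strict_mono_less)
  moreover have "set D \<subseteq> {..U_nat \<beta> (L + g + Q * (2 * k - 1))}"
    using F(1) sm by (auto simp: set_D A_def strict_mono_less_eq)
  ultimately show ?thesis using length_D by blast
qed

lemma U_nat_add_le:
  assumes "\<beta> > 1" "parry \<beta>" and "G > 0" "2 * \<beta> ^ (L + G) \<le> (\<beta> - 1) * real N"
  shows "U_nat \<beta> L + U_nat \<beta> (L + G - 1) \<le> N"
proof -
  have "real (U_nat \<beta> L) \<le> \<beta> ^ (L + G) / (\<beta> - 1)"
    using assms(1,3)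
    by (intro order_trans[OF U_nat_le_power[OF assms(1,2)] divide_right_mono] power_increasing)
      auto
  moreover have "real (U_nat \<beta> (L + G - 1)) \<le> \<beta> ^ (L + G) / (\<beta> - 1)"
    using U_nat_le_power[OF assms(1,2), of "L + G - 1"] assms(3) by simp
  moreover have "2 * (\<beta> ^ (L + G) / (\<beta> - 1)) \<le> real N"
    using assms(1,4) by (simp add: field_simps)
  ultimately show ?thesis by linarith
qed

lemma U_nat_le_corrC:
  assumes "\<beta> > 1" "parry \<beta>" and dfa: "dfao Q \<delta> q0 out" and gen: "generated_by \<beta> \<delta> q0 out s"
    and g: "\<beta> / (\<beta> - 1)\<^sup>2 < \<beta> ^ g" and "k \<ge> 1" "L > 0"
    and N: "2 * \<beta> ^ (L + (g + Q * (2 * k - 1) + 1)) \<le> (\<beta> - 1) * real N"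
  shows "int (U_nat \<beta> L) \<le> corrC (2 * k) s N"
proof -
  obtain D where D: "length D = 2 * k" "sorted_wrt (<) D"
      "set D \<subseteq> {..U_nat \<beta> (L + g + Q * (2 * k - 1))}" "corrV s (U_nat \<beta> L) D = int (U_nat \<beta> L)"
    using ex_shifts_maximal_correlation[OF assms(1,2) dfa gen g \<open>L > 0\<close>, of k] by blast
  have "last D \<in> set D" using D(1) \<open>k \<ge> 1\<close> by (intro last_in_set) auto
  with D(3) have "last D \<le> U_nat \<beta> (L + g + Q * (2 * k - 1))" by blast
  moreover have "U_nat \<beta> L + U_nat \<beta> (L + g + Q * (2 * k - 1)) \<le> N"
    using U_nat_add_le[OF assms(1,2) _ N] by (simp add: add.assoc)
  ultimately have "U_nat \<beta> L + last D \<le> N" by linarith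
  then have "\<bar>corrV s (U_nat \<beta> L) D\<bar> \<le> corrC (2 * k) s N"
    by (rule corrV_le_corrC[OF D(1,2)])
  with D(4) show ?thesis by simp
qed

theorem mainTheorem1:
  fixes \<beta> :: real and k Q :: nat
  assumes "\<beta> > 1" and "parry \<beta>" and "k \<ge> 1"
  shows "\<exists>c::real. c > 0 \<and>
    (\<forall>\<delta> q0 out s. dfao Q \<delta> q0 out \<longrightarrow> generated_by \<beta> \<delta> q0 out s \<longrightarrow>
       (\<exists>N0. \<forall>N\<ge>N0. real_of_int (corrC (2 * k) s N) \<ge> c * real N))"
proof -
  obtain g where g: "\<beta> / (\<beta> - 1)\<^sup>2 < \<beta> ^ g" using real_arch_pow[OF assms(1)] by blast
  define G where "G = g + Q * (2 * k - 1) + 1"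
  define c where "c = (\<beta> - 1) / (2 * \<beta> ^ Suc G)"
  define N0 where "N0 = nat \<lceil>2 * \<beta> ^ Suc G / (\<beta> - 1)\<rceil>"
  have "c > 0" using assms(1) by (simp add: c_def)
  moreover have "c * real N \<le> real_of_int (corrC (2 * k) s N)"
    if "dfao Q \<delta> q0 out" "generated_by \<beta> \<delta> q0 out s" "N0 \<le> N" for \<delta> q0 out s N
  proof -
    define X where "X = real N * (\<beta> - 1) / (2 * \<beta> ^ G)"
    have "2 * \<beta> ^ Suc G / (\<beta> - 1) \<le> real N"
      using real_nat_ceiling_ge of_nat_mono[OF \<open>N0 \<le> N\<close>] unfolding N0_def by (rule order_trans)
    then have "\<beta> \<le> X" using assms(1) by (simp add: X_def field_simps)
    with assms(1) obtain L where L: "\<beta> ^ L \<le> X" "X < \<beta> ^ Suc L"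
      using ex_power_bracket[OF assms(1), of X] by auto
    then have "L > 0" using \<open>\<beta> \<le> X\<close> by (cases L) auto
    have "2 * \<beta> ^ (L + G) \<le> (\<beta> - 1) * real N"
      using L(1) assms(1) by (simp add: X_def power_add field_simps)
    then have "int (U_nat \<beta> L) \<le> corrC (2 * k) s N"
      using U_nat_le_corrC[OF assms(1,2) that(1,2) g assms(3) \<open>L > 0\<close>] by (simp add: G_def)
    moreover have "c * real N < \<beta> ^ L"
      using L(2) assms(1) by (simp add: c_def X_def field_simps)
    ultimately show ?thesis
      using power_le_U_nat[OF assms(1,2), of L] by linarith
  qed
  ultimately show ?thesis by blast
qed

end
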